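(* Let $w\in\mathcal{G}$, $\varepsilon>0$, $k\ge2$, and let $S\subseteq w\mathcal{G}$ be a strongly $k$-product-free set that is $\varepsilon$-regular in $w\mathcal{G}$. Let $d=\bar{d}_{w\mathcal{G}}(S)$. Then \[ d\left(1+\frac{d}{d+2\varepsilon}+\cdots+\left(\frac{d}{d+2\varepsilon}\right)^{k-1}\right)\le 1.\]
   Context: $\mathcal{A}$ is a finite alphabet with $|\mathcal{A}|\ge2$, $\mathcal{F}$ the free group over $\mathcal{A}$, elements identified with reduced words, $|w|$ the reduced length. Fix $x,y\in\mathcal{A}\cup\mathcal{A}^{-1}$ with $x\ne y^{-1}$, and let $\mathcal{G}$ be the subsemigroup of $\mathcal{F}$ consisting of reduced words beginning with $x$ and ending with $y$, together with the empty word. For $v\in\mathcal{G}$, $v\mathcal{G}=\{v\alpha:\alpha\in\mathcal{G}\}\subseteq\mathcal{G}$. The measure $\mu$ on $\mathcal{F}$ is $\mu(\{u\})=\frac{1}{2|\mathcal{A}|(2|\mathcal{A}|-1)^{|u|-1}}$ for nonempty $u$, extended additively. For $A\subseteq\mathcal{F}$, $A_{\le n}=\{u\in A:|u|\le n\}$; for $A\subseteq\mathcal{H}\subseteq\mathcal{F}$, $\bar{d}_{\mathcal{H}}(A)=\limsup_{n\to\infty}\mu(A_{\le n})/\mu(\mathcal{H}_{\le n})$. A set $S\subseteq w\mathcal{G}$ is $\varepsilon$-regular in $w\mathcal{G}$ if $\bar{d}_{ww'\mathcal{G}}(S\cap ww'\mathcal{G})\le\bar{d}_{w\mathcal{G}}(S)+\varepsilon$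 for all $w'\in\mathcal{G}$. A set is strongly $k$-product-free if for every $2\le\ell\le k$ there are no $x_1,\dots,x_\ell,z$ in it with $x_1\cdots x_\ell=z$. *)

theory Defs
  imports "HOL-Analysis.Analysis" "HOL-Library.Liminf_Limsup"
begin

text \<open>Letters: a generator paired with a flag; (a, True) is a, (a, False) is a inverse.
  Free group elements are reduced words (lists of letters).\<close>

type_synonym 'a letter = "'a \<times> bool"

definition inv_letter :: "'a letter \<Rightarrow> 'a letter" where
  "inv_letter l = (fst l, \<not> snd l)"

definition reduced :: "'a letter list \<Rightarrow> bool" where
  "reduced u \<longleftrightarrow> successively (\<lambda>p q. q \<noteq> inv_letter p) u"

definition freegrp :: "'a letter list set" where
  "freegrp = {u. reduced u}"

fun push :: "'a letter \<Rightarrow> 'a letter list \<Rightarrow> 'a letter list" where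
  "push l [] = [l]"
| "push l (m # ms) = (if m = inv_letter l then ms else l # m # ms)"

definition reduce :: "'a letter list \<Rightarrow> 'a letter list" where
  "reduce u = foldr push u []"

definition fmult :: "'a letter list \<Rightarrow> 'a letter list \<Rightarrow> 'a letter list" where
  "fmult u v = reduce (u @ v)"

definition fprod :: "'a letter list list \<Rightarrow> 'a letter list" where
  "fprod xs = foldr fmult xs []"

definition semiG :: "'a letter \<Rightarrow> 'a letter \<Rightarrow> 'a letter list set" where
  "semiG x y = {u. reduced u \<and> (u = [] \<or> (hd u = x \<and> last u = y))}"

definition coset :: "'a letter list \<Rightarrow> 'a letter list set \<Rightarrow> 'a letter list set" where
  "coset v H = (\<lambda>\<alpha>. fmult v \<alpha>) ` H"

text \<open>The measure mu (empty word gets weight 0; irrelevant for densities).\<close>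
definition weight :: "'a::finite letter list \<Rightarrow> real" where
  "weight u = (if u = [] then 0
     else 1 / (2 * real CARD('a) * (2 * real CARD('a) - 1) ^ (length u - 1)))"

definition mu :: "'a::finite letter list set \<Rightarrow> real" where
  "mu A = (\<Sum>u\<in>A. weight u)"

definition trunc :: "'a letter list set \<Rightarrow> nat \<Rightarrow> 'a letter list set" where
  "trunc A n = {u \<in> A. length u \<le> n}"

definition upper_density :: "'a::finite letter list set \<Rightarrow> 'a letter list set \<Rightarrow> real" where
  "upper_density H A =
     real_of_ereal (limsup (\<lambda>n. ereal (mu (trunc A n) / mu (trunc H n))))"

definition eps_regular ::
  "'a::finite letter \<Rightarrow> 'a letter \<Rightarrow> real \<Rightarrow> 'a letter list \<Rightarrow> 'a letter list set \<Rightarrow> bool" where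
  "eps_regular x y \<epsilon> w S \<longleftrightarrow> S \<subseteq> coset w (semiG x y) \<and>
     (\<forall>w' \<in> semiG x y.
        upper_density (coset (fmult w w') (semiG x y)) (S \<inter> coset (fmult w w') (semiG x y))
          \<le> upper_density (coset w (semiG x y)) S + \<epsilon>)"

definition strongly_product_free :: "nat \<Rightarrow> 'a letter list set \<Rightarrow> bool" where
  "strongly_product_free k S \<longleftrightarrow>
     (\<forall>l. 2 \<le> l \<and> l \<le> k \<longrightarrow>
        \<not> (\<exists>xs z. length xs = l \<and> set xs \<subseteq> S \<and> z \<in> S \<and> fprod xs = z))"

end

theory Submission
  imports Defs
begin

text \<open>In the semigroup \<open>G\<close> the free product is concatenation, so for \<open>s \<in> S\<close> the translate
  \<open>s w G\<close> is the set of words with prefix \<open>s w\<close>, and its relative measure in \<open>w G\<close> is about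
  \<open>b ^ -|s|\<close> with \<open>b = 2|A| - 1\<close>. Call \<open>s \<in> S\<close> minimal if \<open>s w\<close> lies in no cone \<open>t w G\<close> with
  \<open>t \<in> S\<close>, \<open>t \<noteq> s\<close>. Cones are laminar, so the cones of minimal elements are pairwise disjoint; they
  cover \<open>S\<close> up to a set of density zero, because a word lies in at most \<open>|w|\<close> cones \<open>t w G\<close> of
  elements \<open>t\<close> covered by no cone. As \<open>S\<close> has relative density at most \<open>d + \<epsilon>\<close> in every cone,
  \<open>d \<le> (d + \<epsilon>) \<Sum> b ^ -|s|\<close> over the minimal \<open>s\<close>, so a finite set \<open>F\<close> of minimal elements has
  \<open>\<lambda> = \<Sum>s\<in>F. b ^ -|s| \<ge> d / (d + 2\<epsilon>)\<close>.

  Let \<open>P j\<close> be the set of products of at most \<open>j + 1\<close> elements of \<open>S\<close>. For \<open>j + 2 \<le> k\<close>, strong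
  product-freeness makes \<open>S\<close> and the translates \<open>s P j\<close>, \<open>s \<in> F\<close>, pairwise disjoint subsets of
  \<open>P (j + 1)\<close>. Along lengths realising the upper density of \<open>S\<close> this gives
  \<open>dens P (j + 1) \<ge> d + \<lambda> dens P j\<close>, hence \<open>1 \<ge> dens P (k - 1) \<ge> d (1 + \<lambda> + \<dots> + \<lambda> ^ (k - 1))\<close>.\<close>

section \<open>Reduced words and cones\<close>

lemma inv_letter_inv [simp]: "inv_letter (inv_letter l) = l"
  by (simp add: inv_letter_def)

lemma inv_letter_eq_iff: "inv_letter a = b \<longleftrightarrow> a = inv_letter b"
  by (auto simp: inv_letter_def)

lemma reduced_Nil [simp]: "reduced []"
  by (simp add: reduced_def)

lemma reduced_Cons: "reduced (a # u) \<longleftrightarrow> reduced u \<and> (u = [] \<or> hd u \<noteq> inv_letter a)"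
  unfolding reduced_def by (auto simp: successively_Cons)

lemma reduced_append:
  "reduced (u @ v) \<longleftrightarrow> reduced u \<and> reduced v \<and> (u = [] \<or> v = [] \<or> hd v \<noteq> inv_letter (last u))"
  unfolding reduced_def by (simp add: successively_append_iff)

lemma reduced_snoc: "reduced (u @ [b]) \<longleftrightarrow> reduced u \<and> (u = [] \<or> b \<noteq> inv_letter (last u))"
  unfolding reduced_append by (auto simp: reduced_def)

lemma reduce_reduced: "reduced u \<Longrightarrow> reduce u = u"
proof (induction u)
  case Nil
  then show ?case by (simp add: reduce_def)
next
  case (Cons a u)
  then have "reduce (a # u) = push a u"
    by (simp add: reduce_def reduced_Cons)
  also have "\<dots> = a # u"
    using Cons.prems by (cases u) (auto simp: reduced_Cons)
  finally show ?case .
qed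

lemma Nil_in_semiG [simp]: "[] \<in> semiG x y"
  by (simp add: semiG_def)

definition cone :: "'a letter \<Rightarrow> 'a letter \<Rightarrow> 'a letter list \<Rightarrow> 'a letter list set" where
  "cone x y v = (\<lambda>a. v @ a) ` semiG x y"

lemma mem_cone_self: "v \<in> cone x y v"
  unfolding cone_def by (rule image_eqI[of _ _ "[]"]) auto

lemma length_le_of_mem_cone: "z \<in> cone x y v \<Longrightarrow> length v \<le> length z"
  unfolding cone_def by auto

lemma take_length_of_mem_cone: "z \<in> cone x y v \<Longrightarrow> take (length v) z = v"
  unfolding cone_def by auto

lemma take_length_of_mem_cone_append: "z \<in> cone x y (q @ w) \<Longrightarrow> take (length q) z = q"
  unfolding cone_def by auto

context
  fixes x y :: "'a letter"
  assumes xy: "x \<noteq> inv_letter y"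
begin

lemma semiG_append: "u \<in> semiG x y \<Longrightarrow> v \<in> semiG x y \<Longrightarrow> u @ v \<in> semiG x y"
  using xy by (cases "u = []"; cases "v = []")
    (auto simp: semiG_def reduced_append inv_letter_eq_iff)

lemma fmult_semiG: "u \<in> semiG x y \<Longrightarrow> v \<in> semiG x y \<Longrightarrow> fmult u v = u @ v"
  using semiG_append[of u v] by (simp add: fmult_def semiG_def reduce_reduced)

lemma coset_eq_cone: "v \<in> semiG x y \<Longrightarrow> coset v (semiG x y) = cone x y v"
  unfolding coset_def cone_def using fmult_semiG by auto

lemma cone_subset_semiG: "v \<in> semiG x y \<Longrightarrow> cone x y v \<subseteq> semiG x y"
  unfolding cone_def using semiG_append by auto

lemma cone_subset_cone: "v \<in> cone x y u \<Longrightarrow> cone x y v \<subseteq> cone x y u"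
  unfolding cone_def using semiG_append by force

lemma cone_append: "v \<in> semiG x y \<Longrightarrow> cone x y (s @ v) = (\<lambda>a. s @ a) ` cone x y v"
  unfolding cone_def by auto

lemma cone_append_closed:
  assumes w: "w \<in> semiG x y" and a: "a \<in> cone x y w" and b: "b \<in> cone x y w"
  shows "a @ b \<in> cone x y w"
proof -
  obtain \<alpha> \<beta> where "\<alpha> \<in> semiG x y" "a = w @ \<alpha>" "\<beta> \<in> semiG x y" "b = w @ \<beta>"
    using a b unfolding cone_def by auto
  then show ?thesis
    unfolding cone_def using w semiG_append by (intro image_eqI[of _ _ "\<alpha> @ w @ \<beta>"]) auto
qed

lemma cone_nested:
  assumes v1: "v1 \<in> semiG x y" and v2: "v2 \<in> semiG x y" and ne: "v2 \<noteq> []"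
    and z1: "z \<in> cone x y v1" and z2: "z \<in> cone x y v2" and le: "length v1 \<le> length v2"
  shows "v2 \<in> cone x y v1"
proof -
  obtain a1 where a1: "a1 \<in> semiG x y" "z = v1 @ a1" using z1 unfolding cone_def by auto
  obtain a2 where a2: "a2 \<in> semiG x y" "z = v2 @ a2" using z2 unfolding cone_def by auto
  define b where "b = drop (length v1) v2"
  have v2_eq: "v2 = v1 @ b"
    using a1 a2 le unfolding b_def by (metis append_eq_append_conv_if append_take_drop_id)
  have a1_eq: "a1 = b @ a2" using a1 a2 v2_eq by simp
  have "b \<in> semiG x y"
  proof (cases "b = []")
    case False
    have "reduced b" using v2 v2_eq by (simp add: semiG_def reduced_append)
    moreover have "hd b = x" using a1 a1_eq False by (auto simp: semiG_def)
    moreover have "last b = y" using v2 v2_eq False ne by (auto simp: semiG_def)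
    ultimately show ?thesis by (simp add: semiG_def)
  qed simp
  then show ?thesis using v2_eq unfolding cone_def by auto
qed

end

section \<open>The measure \<open>\<mu>\<close>\<close>

definition base :: "'a::finite itself \<Rightarrow> real" where
  "base _ = 2 * real CARD('a) - 1"

lemma base_pos: "base TYPE('a::finite) > 0"
proof -
  have "real CARD('a) \<ge> 1" using finite_UNIV_card_ge_0[where 'a='a] by simp
  then show ?thesis unfolding base_def by linarith
qed

lemma card_letters: "card (UNIV :: 'a::finite letter set) = 2 * CARD('a)"
  by (simp add: card_UNIV_bool)

lemma weight_Nil [simp]: "weight [] = 0"
  by (simp add: weight_def)

lemma weight_eq: "(u::'a::finite letter list) \<noteq> [] \<Longrightarrow>
    weight u = 1 / ((base TYPE('a) + 1) * base TYPE('a) ^ (length u - 1))"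
  by (simp add: weight_def base_def)

lemma weight_nonneg: "0 \<le> weight (u::'a::finite letter list)"
  using base_pos[where 'a='a] by (cases "u = []") (auto simp: weight_eq)

lemma weight_append:
  assumes "a \<noteq> []"
  shows "weight ((s::'a::finite letter list) @ a) = weight a / base TYPE('a) ^ length s"
proof -
  have "length (s @ a) - 1 = length s + (length a - 1)" using assms by (cases a) auto
  then show ?thesis using assms by (simp add: weight_eq power_add)
qed

lemma weight_le: "weight (u::'a::finite letter list) \<le> 1 / base TYPE('a) ^ length u"
proof (cases u)
  case (Cons a v)
  let ?b = "base TYPE('a)"
  have "?b * ?b ^ length v \<le> (?b + 1) * ?b ^ length v"
    using base_pos[where 'a='a] by (intro mult_right_mono) auto
  then show ?thesis using Cons base_pos[where 'a='a] by (simp add: weight_eq frac_le)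
qed (simp add: base_pos)

lemma finite_trunc: "finite (trunc (A::'a::finite letter list set) n)"
proof (rule finite_subset)
  show "trunc A n \<subseteq> {xs. set xs \<subseteq> UNIV \<and> length xs \<le> n}" by (auto simp: trunc_def)
qed (rule finite_lists_length_le, simp)

lemma mu_nonneg: "0 \<le> mu (A::'a::finite letter list set)"
  unfolding mu_def by (rule sum_nonneg) (simp add: weight_nonneg)

lemma mu_trunc_mono: "A \<subseteq> B \<Longrightarrow> mu (trunc (A::'a::finite letter list set) n) \<le> mu (trunc B n)"
  unfolding mu_def by (rule sum_mono2[OF finite_trunc]) (auto simp: trunc_def weight_nonneg)

lemma mu_trunc_mono_length: "m \<le> n \<Longrightarrow> mu (trunc (A::'a::finite letter list set) m) \<le> mu (trunc A n)"
  unfolding mu_def by (rule sum_mono2[OF finite_trunc]) (auto simp: trunc_def weight_nonneg)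

lemma mu_Un_le:
  "finite A \<Longrightarrow> finite B \<Longrightarrow> mu (A \<union> B) \<le> mu A + mu (B::'a::finite letter list set)"
  unfolding mu_def using sum.union_inter[of A B weight] sum_nonneg[of "A \<inter> B" weight] weight_nonneg
  by (metis (no_types, lifting) finite_Int le_add_same_cancel1 add.commute)

lemma mu_UN_le:
  assumes "finite I" "\<And>i. i \<in> I \<Longrightarrow> finite (F i)"
  shows "mu (\<Union>i\<in>I. F i) \<le> (\<Sum>i\<in>I. mu (F i :: 'a::finite letter list set))"
  using assms
proof (induction I rule: finite_induct)
  case (insert i I)
  then have "mu (F i \<union> (\<Union>j\<in>I. F j)) \<le> mu (F i) + mu (\<Union>j\<in>I. F j)"
    by (intro mu_Un_le) auto
  then show ?case using insert by simp
qed (simp add: mu_def)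

definition reduced_words :: "nat \<Rightarrow> 'a letter list set" where
  "reduced_words m = {u. reduced u \<and> length u = m}"

lemma finite_reduced_words: "finite (reduced_words m :: 'a::finite letter list set)"
proof (rule finite_subset)
  show "reduced_words m \<subseteq> {xs. set xs \<subseteq> UNIV \<and> length xs \<le> m}" by (auto simp: reduced_words_def)
qed (rule finite_lists_length_le, simp)

lemma card_reduced_words:
  "card (reduced_words (Suc m) :: 'a::finite letter list set) = 2 * CARD('a) * (2 * CARD('a) - 1) ^ m"
proof (induction m)
  case 0
  have "reduced_words (Suc 0) = (\<lambda>a. [a]) ` (UNIV :: 'a letter set)"
    by (auto simp: reduced_words_def reduced_def length_Suc_conv)
  then have "card (reduced_words (Suc 0) :: 'a letter list set) = card (UNIV :: 'a letter set)"
    by (simp add: card_image inj_on_def)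
  then show ?case by (simp add: card_letters)
next
  case (Suc m)
  let ?S = "SIGMA u:(reduced_words (Suc m) :: 'a letter list set). UNIV - {inv_letter (last u)}"
  have "reduced_words (Suc (Suc m)) = (\<lambda>(u, b). u @ [b]) ` ?S"
  proof
    show "reduced_words (Suc (Suc m)) \<subseteq> (\<lambda>(u, b). u @ [b]) ` ?S"
    proof
      fix v :: "'a letter list" assume v: "v \<in> reduced_words (Suc (Suc m))"
      then obtain u b where v_eq: "v = u @ [b]"
        by (cases v rule: rev_cases) (auto simp: reduced_words_def)
      with v have "(u, b) \<in> ?S" by (auto simp: reduced_words_def reduced_snoc)
      with v_eq show "v \<in> (\<lambda>(u, b). u @ [b]) ` ?S" by force
    qed
  qed (auto simp: reduced_words_def reduced_snoc)
  moreover have "inj_on (\<lambda>(u, b). u @ [b]) ?S" by (auto simp: inj_on_def)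
  ultimately have "card (reduced_words (Suc (Suc m)) :: 'a letter list set) = card ?S"
    by (simp add: card_image)
  also have "\<dots> = (\<Sum>u\<in>reduced_words (Suc m). card (UNIV - {inv_letter (last u)} :: 'a letter set))"
    by (rule card_SigmaI) (auto simp: finite_reduced_words)
  also have "\<dots> = card (reduced_words (Suc m) :: 'a letter list set) * (2 * CARD('a) - 1)"
    by (simp add: card_Diff_singleton card_letters mult.commute)
  finally show ?case using Suc by simp
qed

lemma mu_const_length:
  assumes "finite A" "\<And>u. u \<in> A \<Longrightarrow> length u = Suc m"
  shows "mu (A :: 'a::finite letter list set) = card A / ((base TYPE('a) + 1) * base TYPE('a) ^ m)"
proof -
  have "mu A = (\<Sum>u\<in>A. 1 / ((base TYPE('a) + 1) * base TYPE('a) ^ m))"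
    unfolding mu_def
  proof (intro sum.cong refl)
    fix u assume "u \<in> A"
    then have "length u = Suc m" by (rule assms(2))
    then show "weight u = 1 / ((base TYPE('a) + 1) * base TYPE('a) ^ m)"
      by (cases u) (simp_all add: weight_eq)
  qed
  then show ?thesis by simp
qed

lemma card_reduced_words_eq:
  "card (reduced_words (Suc m) :: 'a::finite letter list set) = (base TYPE('a) + 1) * base TYPE('a) ^ m"
proof -
  have "CARD('a) \<ge> 1" using finite_UNIV_card_ge_0[where 'a='a] by simp
  then show ?thesis by (simp add: card_reduced_words base_def of_nat_diff)
qed

lemma mu_reduced_words: "mu (reduced_words (Suc m) :: 'a::finite letter list set) = 1"
proof -
  have "mu (reduced_words (Suc m) :: 'a letter list set)
      = card (reduced_words (Suc m) :: 'a letter list set) / ((base TYPE('a) + 1) * base TYPE('a) ^ m)"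
    by (rule mu_const_length[OF finite_reduced_words]) (simp add: reduced_words_def)
  then show ?thesis using base_pos[where 'a='a] by (simp add: card_reduced_words_eq)
qed

lemma mu_trunc_Suc_le:
  assumes "A \<subseteq> Collect reduced"
  shows "mu (trunc (A::'a::finite letter list set) (Suc n)) \<le> mu (trunc A n) + 1"
proof -
  let ?L = "{u\<in>A. length u = Suc n}"
  have "finite ?L"
    by (rule finite_subset[OF _ finite_trunc[of A "Suc n"]]) (auto simp: trunc_def)
  have "trunc A (Suc n) = trunc A n \<union> ?L" by (auto simp: trunc_def)
  then have "mu (trunc A (Suc n)) = mu (trunc A n \<union> ?L)" by simp
  also have "\<dots> = mu (trunc A n) + mu ?L"
    unfolding mu_def by (rule sum.union_disjoint) (use \<open>finite ?L\<close> finite_trunc[of A n] in \<open>auto simp: trunc_def\<close>)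
  finally have "mu (trunc A (Suc n)) = mu (trunc A n) + mu ?L" .
  moreover have "mu ?L \<le> mu (reduced_words (Suc n) :: 'a letter list set)"
    unfolding mu_def using assms
    by (intro sum_mono2[OF finite_reduced_words]) (auto simp: reduced_words_def weight_nonneg)
  ultimately show ?thesis by (simp add: mu_reduced_words)
qed

lemma mu_trunc_le_diff:
  assumes "A \<subseteq> Collect reduced"
  shows "mu (trunc (A::'a::finite letter list set) n) \<le> mu (trunc A (n - L)) + real L"
proof (induction L)
  case (Suc L)
  show ?case
  proof (cases "n - L = 0")
    case False
    then have "n - L = Suc (n - Suc L)" by simp
    then have "mu (trunc A (n - L)) \<le> mu (trunc A (n - Suc L)) + 1"
      using mu_trunc_Suc_le[OF assms] by metis
    then show ?thesis using Suc by simp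
  qed (use Suc in simp)
qed simp

lemma mu_trunc_prefix_ge:
  "mu (trunc (A::'a::finite letter list set) (n - length s)) / base TYPE('a) ^ length s
     \<le> mu (trunc ((\<lambda>a. s @ a) ` A) n)"
proof -
  let ?B = "trunc A (n - length s) - {[]}"
  have "mu (trunc A (n - length s)) = sum weight ?B"
    unfolding mu_def by (rule sum.mono_neutral_right) (auto simp: finite_trunc)
  then have "mu (trunc A (n - length s)) / base TYPE('a) ^ length s = (\<Sum>a\<in>?B. weight (s @ a))"
    by (simp add: sum_divide_distrib weight_append)
  also have "\<dots> = sum weight ((\<lambda>a. s @ a) ` ?B)"
    by (rule sum.reindex_cong[symmetric]) (auto simp: inj_on_def)
  also have "\<dots> \<le> mu (trunc ((\<lambda>a. s @ a) ` A) n)"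
    unfolding mu_def
    by (rule sum_mono2[OF finite_trunc]) (auto simp: trunc_def weight_nonneg neq_Nil_conv)
  finally show ?thesis .
qed

text \<open>The upper bound pays \<open>1\<close> for the word \<open>s\<close> itself, whose preimage \<open>[]\<close> has weight \<open>0\<close>.\<close>
lemma mu_trunc_prefix_le:
  "mu (trunc ((\<lambda>a. s @ a) ` (A::'a::finite letter list set)) n)
     \<le> (mu (trunc A n) + 1) / base TYPE('a) ^ length s"
proof -
  let ?B = "trunc A n - {[]}"
  have "trunc ((\<lambda>a. s @ a) ` A) n \<subseteq> insert s ((\<lambda>a. s @ a) ` ?B)"
    by (auto simp: trunc_def)
  then have "mu (trunc ((\<lambda>a. s @ a) ` A) n) \<le> sum weight (insert s ((\<lambda>a. s @ a) ` ?B))"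
    unfolding mu_def by (intro sum_mono2) (auto simp: finite_trunc weight_nonneg)
  also have "\<dots> \<le> weight s + sum weight ((\<lambda>a. s @ a) ` ?B)"
    by (simp add: sum.insert_if finite_trunc weight_nonneg)
  also have "sum weight ((\<lambda>a. s @ a) ` ?B) = (\<Sum>a\<in>?B. weight (s @ a))"
    by (rule sum.reindex_cong) (auto simp: inj_on_def)
  also have "\<dots> = sum weight ?B / base TYPE('a) ^ length s"
    by (simp add: sum_divide_distrib weight_append)
  also have "sum weight ?B = mu (trunc A n)"
    unfolding mu_def by (rule sum.mono_neutral_left) (auto simp: finite_trunc)
  finally show ?thesis
    using weight_le[of s] by (simp add: add_divide_distrib)
qed

lemma exists_letter_avoiding:
  assumes "CARD('a::finite) \<ge> 2"
  shows "\<exists>g::'a letter. g \<noteq> a \<and> g \<noteq> b"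
proof (rule ccontr)
  assume "\<not> ?thesis"
  then have "card (UNIV :: 'a letter set) \<le> card {a, b}" by (intro card_mono) auto
  also have "\<dots> \<le> 2" by (simp add: card_insert_if)
  finally show False using assms by (simp add: card_letters)
qed

lemma semiG_reduced: "semiG x y \<subseteq> Collect reduced"
  by (auto simp: semiG_def)

context
  fixes x y :: "'a::finite letter"
  assumes xy: "x \<noteq> inv_letter y"
begin

lemma cone_reduced: "v \<in> semiG x y \<Longrightarrow> cone x y v \<subseteq> Collect reduced"
  using cone_subset_semiG[OF xy] semiG_reduced by blast

text \<open>Framing a reduced word \<open>v\<close> as \<open>x g v h y\<close> with suitable letters \<open>g, h\<close> embeds the reduced
  words of length \<open>m + 1\<close> into the words of \<open>G\<close> of length \<open>m + 5\<close>; this needs \<open>|A| \<ge> 2\<close>.\<close>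
lemma mu_semiG_length_ge:
  assumes card: "CARD('a) \<ge> 2"
  shows "1 / base TYPE('a) ^ 4 \<le> mu {u \<in> semiG x y. length u = Suc m + 4}"
proof -
  let ?b = "base TYPE('a)"
  define g where "g v = (SOME g. g \<noteq> inv_letter x \<and> g \<noteq> inv_letter (hd v))" for v :: "'a letter list"
  define h where "h v = (SOME h. h \<noteq> inv_letter y \<and> h \<noteq> inv_letter (last v))" for v :: "'a letter list"
  have g: "g v \<noteq> inv_letter x \<and> g v \<noteq> inv_letter (hd v)" for v
    unfolding g_def by (rule someI_ex) (rule exists_letter_avoiding[OF card])
  have h: "h v \<noteq> inv_letter y \<and> h v \<noteq> inv_letter (last v)" for v
    unfolding h_def by (rule someI_ex) (rule exists_letter_avoiding[OF card])
  define frame where "frame v = x # g v # v @ [h v, y]" for v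
  let ?R = "reduced_words (Suc m) :: 'a letter list set"
  let ?T = "{u \<in> semiG x y. length u = Suc m + 4}"
  have fin: "finite ?T"
    by (rule finite_subset[OF _ finite_reduced_words[of "Suc m + 4"]])
      (auto simp: reduced_words_def semiG_def)
  have "frame ` ?R \<subseteq> ?T"
  proof (rule image_subsetI)
    fix v assume v: "v \<in> ?R"
    then have "v \<noteq> []" "reduced v" by (auto simp: reduced_words_def)
    then have "reduced (v @ [h v, y])"
      using h[of v] by (auto simp: reduced_append reduced_Cons inv_letter_eq_iff)
    then have "reduced (frame v)"
      using g[of v] \<open>v \<noteq> []\<close> by (auto simp: frame_def reduced_Cons inv_letter_eq_iff)
    then show "frame v \<in> ?T" using v by (auto simp: frame_def semiG_def reduced_words_def)
  qed
  moreover have "inj_on frame ?R"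
  proof (rule inj_onI)
    fix v1 v2 assume v: "v1 \<in> ?R" "v2 \<in> ?R" "frame v1 = frame v2"
    have "take (length v) (drop 2 (frame v)) = v" for v by (simp add: frame_def)
    moreover have "length v1 = length v2" using v by (simp add: reduced_words_def)
    ultimately show "v1 = v2" using v(3) by metis
  qed
  ultimately have "card ?R \<le> card ?T" using card_inj_on_le[OF _ _ fin] by blast
  then have "real (card ?R) / ((?b + 1) * ?b ^ (m + 4)) \<le> real (card ?T) / ((?b + 1) * ?b ^ (m + 4))"
    using base_pos[where 'a='a] by (intro divide_right_mono) auto
  also have "\<dots> = mu ?T" by (rule mu_const_length[OF fin, symmetric]) simp
  finally show ?thesis
    using base_pos[where 'a='a] by (simp add: card_reduced_words_eq power_add)
qed

lemma mu_trunc_semiG_ge: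
  assumes card: "CARD('a) \<ge> 2"
  shows "real m / base TYPE('a) ^ 4 \<le> mu (trunc (semiG x y) (m + 5))"
proof (induction m)
  case (Suc m)
  let ?L = "{u \<in> semiG x y. length u = Suc (Suc m) + 4}"
  have "finite ?L"
    by (rule finite_subset[OF _ finite_trunc[of "semiG x y" "Suc m + 5"]]) (auto simp: trunc_def)
  have "trunc (semiG x y) (Suc m + 5) = trunc (semiG x y) (m + 5) \<union> ?L"
    by (auto simp: trunc_def)
  then have "mu (trunc (semiG x y) (Suc m + 5)) = mu (trunc (semiG x y) (m + 5) \<union> ?L)" by simp
  also have "\<dots> = mu (trunc (semiG x y) (m + 5)) + mu ?L"
    unfolding mu_def
    by (rule sum.union_disjoint) (use \<open>finite ?L\<close> finite_trunc in \<open>auto simp: trunc_def\<close>)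
  finally show ?case
    using Suc mu_semiG_length_ge[OF card, of "Suc m"] by (simp add: add_divide_distrib)
qed (simp add: mu_nonneg)

lemma mu_trunc_cone_at_top:
  assumes card: "CARD('a) \<ge> 2" and v: "v \<in> semiG x y"
  shows "filterlim (\<lambda>n. mu (trunc (cone x y v) n)) at_top sequentially"
  unfolding filterlim_at_top eventually_sequentially
proof
  fix Z :: real
  let ?b = "base TYPE('a)"
  define K where "K = ?b ^ 4 * ?b ^ length v"
  have K: "K > 0" using base_pos[where 'a='a] by (simp add: K_def)
  show "\<exists>N. \<forall>n\<ge>N. Z \<le> mu (trunc (cone x y v) n)"
  proof (intro exI allI impI)
    fix n assume n: "length v + 5 + nat \<lceil>Z * K\<rceil> \<le> n"
    define m where "m = n - length v - 5"
    have "Z \<le> real m / K" using n K unfolding m_def by (simp add: field_simps) linarith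
    also have "\<dots> = (real m / ?b ^ 4) / ?b ^ length v" by (simp add: K_def)
    also have "\<dots> \<le> mu (trunc (semiG x y) (n - length v)) / ?b ^ length v"
      using n base_pos[where 'a='a] mu_trunc_semiG_ge[OF card, of m]
      by (intro divide_right_mono) (auto simp: m_def add.commute)
    also have "\<dots> \<le> mu (trunc (cone x y v) n)"
      unfolding cone_def by (rule mu_trunc_prefix_ge)
    finally show "Z \<le> mu (trunc (cone x y v) n)" .
  qed
qed

end

lemma ratio_trunc_nonneg:
  "0 \<le> mu (trunc (A::'a::finite letter list set) n) / mu (trunc B n)"
  by (simp add: mu_nonneg)

lemma ratio_trunc_le_1:
  assumes "A \<subseteq> B"
  shows "mu (trunc (A::'a::finite letter list set) n) / mu (trunc B n) \<le> 1"
  using mu_nonneg[of "trunc A n"] mu_trunc_mono[OF assms, of n]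
  by (cases "mu (trunc B n) = 0") (auto simp: divide_le_eq_1)

lemma limsup_ratio_trunc_eq:
  assumes "A \<subseteq> B"
  shows "limsup (\<lambda>n. ereal (mu (trunc (A::'a::finite letter list set) n) / mu (trunc B n)))
    = ereal (upper_density B A)"
proof -
  let ?f = "\<lambda>n. ereal (mu (trunc A n) / mu (trunc B n))"
  have "limsup ?f \<le> 1"
    by (rule Limsup_bounded) (simp add: ratio_trunc_le_1[OF assms])
  moreover have "0 \<le> limsup ?f"
    by (rule le_Limsup) (simp_all add: ratio_trunc_nonneg)
  ultimately have "\<bar>limsup ?f\<bar> \<noteq> \<infinity>" by auto
  then show ?thesis
    unfolding upper_density_def by (simp add: ereal_real)
qed

lemma upper_density_nonneg: "A \<subseteq> B \<Longrightarrow> 0 \<le> upper_density B (A::'a::finite letter list set)"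
  unfolding upper_density_def by (rule real_of_ereal_pos, rule le_Limsup) (simp_all add: ratio_trunc_nonneg)

lemma upper_density_subseq:
  assumes "A \<subseteq> B"
  obtains r where "strict_mono r"
    "(\<lambda>i. mu (trunc (A::'a::finite letter list set) (r i)) / mu (trunc B (r i))) \<longlonglongrightarrow> upper_density B A"
proof -
  obtain r where "strict_mono r"
    "((\<lambda>n. ereal (mu (trunc A n) / mu (trunc B n))) \<circ> r)
      \<longlonglongrightarrow> limsup (\<lambda>n. ereal (mu (trunc A n) / mu (trunc B n)))"
    using limsup_subseq_lim by blast
  then show ?thesis using that by (simp add: o_def limsup_ratio_trunc_eq[OF assms])
qed

lemma upper_density_le_of_eventually:
  assumes "A \<subseteq> B" "eventually (\<lambda>n. mu (trunc (A::'a::finite letter list set) n) / mu (trunc B n) \<le> c) sequentially"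
  shows "upper_density B A \<le> c"
proof -
  have "ereal (upper_density B A) \<le> ereal c"
    unfolding limsup_ratio_trunc_eq[OF assms(1), symmetric]
    by (rule Limsup_bounded) (use assms(2) in simp)
  then show ?thesis by simp
qed

lemma eventually_mu_trunc_le_of_upper_density_less:
  assumes "A \<subseteq> B" "upper_density B A < c"
  shows "eventually (\<lambda>n. mu (trunc (A::'a::finite letter list set) n) \<le> c * mu (trunc B n)) sequentially"
proof -
  have "limsup (\<lambda>n. ereal (mu (trunc A n) / mu (trunc B n))) < ereal c"
    using limsup_ratio_trunc_eq[OF assms(1)] assms(2) by simp
  then have "eventually (\<lambda>n. mu (trunc A n) / mu (trunc B n) < c) sequentially"
    by (auto dest: Limsup_lessD)
  then show ?thesis
  proof eventually_elim
    case (elim n)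
    show ?case
    proof (cases "mu (trunc B n) = 0")
      case True
      then show ?thesis using mu_trunc_mono[OF assms(1), of n] mu_nonneg[of "trunc A n"] by simp
    next
      case False
      then have "mu (trunc B n) > 0" using mu_nonneg[of "trunc B n"] by simp
      then show ?thesis using elim by (simp add: divide_less_eq)
    qed
  qed
qed

text \<open>\<open>M\<close> and \<open>a\<close> grow by at most \<open>L\<close> over \<open>L\<close> steps, so shifting by \<open>L\<close> changes the ratio
  \<open>a / M\<close> by \<open>O(L / M)\<close>.\<close>
lemma tendsto_ratio_diff_shift_0:
  fixes M a :: "nat \<Rightarrow> real"
  assumes M: "filterlim M at_top sequentially"
    and M_mono: "\<And>n. M (n - L) \<le> M n" and M_shift: "\<And>n. M n \<le> M (n - L) + real L"
    and a_nonneg: "\<And>n. 0 \<le> a n" and a_le: "\<And>n. a n \<le> M n"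
    and a_mono: "\<And>n. a (n - L) \<le> a n" and a_shift: "\<And>n. a n \<le> a (n - L) + real L"
  shows "(\<lambda>n. a n / M n - a (n - L) / M (n - L)) \<longlonglongrightarrow> 0"
proof (rule Lim_null_comparison)
  have "eventually (\<lambda>n. real L + 1 \<le> M n) sequentially"
    using M unfolding filterlim_at_top by blast
  then show "eventually (\<lambda>n. norm (a n / M n - a (n - L) / M (n - L)) \<le> real L * inverse (M n)) sequentially"
  proof eventually_elim
    case (elim n)
    define q where "q = a (n - L) / M (n - L)"
    have M'_pos: "M (n - L) > 0" using M_shift[of n] elim by simp
    have q: "0 \<le> q" "q \<le> 1" "a (n - L) = q * M (n - L)"
      using a_nonneg[of "n - L"] a_le[of "n - L"] M'_pos by (auto simp: q_def)
    have "a n \<le> q * M (n - L) + L" using a_shift[of n] q(3) by simp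
    also have "q * M (n - L) \<le> q * M n" using M_mono[of n] q(1) by (rule mult_left_mono)
    finally have up: "a n \<le> q * M n + L" by simp
    have "q * M n \<le> q * (M (n - L) + L)" using M_shift[of n] q(1) by (rule mult_left_mono)
    also have "\<dots> \<le> q * M (n - L) + L"
      using q(1,2) mult_left_le_one_le[of "real L" q] by (simp add: algebra_simps)
    also have "\<dots> \<le> a n + L" using a_mono[of n] q(3) by simp
    finally have lo: "q * M n - L \<le> a n" by simp
    have "\<bar>a n / M n - q\<bar> \<le> real L / M n"
      using up lo elim by (simp add: abs_le_iff field_simps)
    then show ?case by (simp add: q_def divide_inverse)
  qed
  show "(\<lambda>n. real L * inverse (M n)) \<longlonglongrightarrow> 0"
    using tendsto_mult[OF tendsto_const[of "real L"] tendsto_inverse_0_at_top[OF M]] by simp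
qed

lemma tendsto_ratio_shift_1:
  fixes M :: "nat \<Rightarrow> real"
  assumes M: "filterlim M at_top sequentially"
    and M_mono: "\<And>n. M (n - L) \<le> M n" and M_shift: "\<And>n. M n \<le> M (n - L) + real L"
  shows "(\<lambda>n. M (n - L) / M n) \<longlonglongrightarrow> 1"
proof -
  have "(\<lambda>n. 1 - M (n - L) / M n) \<longlonglongrightarrow> 0"
  proof (rule Lim_null_comparison)
    have "eventually (\<lambda>n. 1 \<le> M n) sequentially"
      using M unfolding filterlim_at_top by blast
    then show "eventually (\<lambda>n. norm (1 - M (n - L) / M n) \<le> real L * inverse (M n)) sequentially"
    proof eventually_elim
      case (elim n)
      have "norm (1 - M (n - L) / M n) = (M n - M (n - L)) / M n"
        using elim M_mono[of n] by (simp add: field_simps)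
      also have "\<dots> \<le> real L / M n" using elim M_shift[of n] by (intro divide_right_mono) auto
      finally show ?case by (simp add: divide_inverse)
    qed
    show "(\<lambda>n. real L * inverse (M n)) \<longlonglongrightarrow> 0"
      using tendsto_mult[OF tendsto_const[of "real L"] tendsto_inverse_0_at_top[OF M]] by simp
  qed
  then have "(\<lambda>n. 1 - (1 - M (n - L) / M n)) \<longlonglongrightarrow> 1 - 0"
    by (intro tendsto_diff tendsto_const)
  then show ?thesis by simp
qed

text \<open>The recursive lower bound for the relative measure of products of at most \<open>j + 1\<close> factors:
  the products of \<open>j + 2\<close> factors contain \<open>S\<close> and, disjointly, the translates \<open>s P j\<close>, \<open>s \<in> F\<close>.\<close>
primrec product_lower_bound ::
  "(nat \<Rightarrow> real) \<Rightarrow> (nat \<Rightarrow> real) \<Rightarrow> 'b set \<Rightarrow> ('b \<Rightarrow> nat) \<Rightarrow> real \<Rightarrow> nat \<Rightarrow> nat \<Rightarrow> real" where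
  "product_lower_bound r M F len b 0 n = r n"
| "product_lower_bound r M F len b (Suc j) n = r n +
     (\<Sum>s\<in>F. (1 / b ^ len s) * (M (n - len s) / M n) * product_lower_bound r M F len b j (n - len s))"

lemma product_lower_bound_tendsto:
  assumes r: "\<And>L. (\<lambda>i. r (\<rho> i - L)) \<longlonglongrightarrow> d"
    and M: "\<And>L a. (\<lambda>i. M (\<rho> i - L - a) / M (\<rho> i - L)) \<longlonglongrightarrow> 1"
  shows "(\<lambda>i. product_lower_bound r M F len b j (\<rho> i - L))
    \<longlonglongrightarrow> d * (\<Sum>i<Suc j. (\<Sum>s\<in>F. 1 / b ^ len s) ^ i)"
proof (induction j arbitrary: L)
  case 0
  then show ?case using r by simp
next
  case (Suc j)
  let ?lam = "\<Sum>s\<in>F. 1 / b ^ len s"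
  let ?c = "d * (\<Sum>i<Suc j. ?lam ^ i)"
  have "(\<lambda>i. product_lower_bound r M F len b (Suc j) (\<rho> i - L))
      \<longlonglongrightarrow> d + (\<Sum>s\<in>F. (1 / b ^ len s) * 1 * ?c)"
    unfolding product_lower_bound.simps
  proof (intro tendsto_add tendsto_sum tendsto_mult tendsto_const r M)
    fix s
    show "(\<lambda>i. product_lower_bound r M F len b j (\<rho> i - L - len s)) \<longlonglongrightarrow> ?c"
      using Suc.IH[of "L + len s"] by (simp add: diff_diff_left)
  qed
  also have "d + (\<Sum>s\<in>F. (1 / b ^ len s) * 1 * ?c) = d + ?lam * ?c"
    by (simp add: sum_distrib_right)
  also have "\<dots> = d * (\<Sum>i<Suc (Suc j). ?lam ^ i)"
    unfolding sum.lessThan_Suc_shift[of "\<lambda>i. ?lam ^ i" "Suc j"]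
    by (simp add: sum_distrib_left algebra_simps)
  finally show ?case .
qed

lemma mult_ratio_cancel:
  fixes a c M M' :: real
  assumes "0 \<le> a" "a \<le> M'"
  shows "c * (M' / M) * (a / M') = c * a / M"
  using assms by (cases "M' = 0") (simp_all add: field_simps)

section \<open>Covering a regular set by cones of minimal elements\<close>

definition prefix_mass :: "'a::finite letter list set \<Rightarrow> real" where
  "prefix_mass F = (\<Sum>s\<in>F. 1 / base TYPE('a) ^ length s)"

lemma prefix_mass_nonneg: "0 \<le> prefix_mass F"
  unfolding prefix_mass_def using base_pos[where 'a='a] by (intro sum_nonneg) simp

locale regular_product_free =
  fixes x y :: "'a::finite letter" and w :: "'a letter list" and S :: "'a letter list set"
    and \<epsilon> :: real and k :: nat
  assumes card_ge_2: "CARD('a) \<ge> 2" and xy: "x \<noteq> inv_letter y" and w_in_semiG: "w \<in> semiG x y"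
    and eps_pos: "\<epsilon> > 0" and k_ge_2: "k \<ge> 2" and S_subset_cone: "S \<subseteq> cone x y w"
    and product_free: "strongly_product_free k S"
    and regular: "\<And>s. s \<in> S \<Longrightarrow>
      upper_density (cone x y (s @ w)) (S \<inter> cone x y (s @ w)) \<le> upper_density (cone x y w) S + \<epsilon>"
begin

abbreviation "G \<equiv> semiG x y"
abbreviation "Cw \<equiv> cone x y w"
abbreviation "Cs s \<equiv> cone x y (s @ w)"
abbreviation "Mw n \<equiv> mu (trunc Cw n)"
abbreviation "dens \<equiv> upper_density Cw S"

definition minimal :: "'a letter list set" where
  "minimal = {s \<in> S. \<forall>t\<in>S. s @ w \<in> Cs t \<longrightarrow> t = s}"

definition uncovered :: "'a letter list set" where
  "uncovered = {z \<in> S. \<forall>s\<in>S. z \<notin> Cs s}"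

lemma Cw_subset_semiG: "Cw \<subseteq> G"
  using cone_subset_semiG[OF xy w_in_semiG] .

lemma S_subset_semiG: "S \<subseteq> G"
  using S_subset_cone Cw_subset_semiG by blast

lemma S_reduced: "S \<subseteq> Collect reduced"
  using S_subset_semiG semiG_reduced by blast

lemma dens_nonneg: "0 \<le> dens"
  by (rule upper_density_nonneg[OF S_subset_cone])

lemma Nil_notin_S: "[] \<notin> S"
proof
  assume "[] \<in> S"
  moreover have "fprod [[], []] = ([] :: 'a letter list)"
    by (simp add: fprod_def fmult_def reduce_def)
  moreover have "\<not> (\<exists>xs z. length xs = 2 \<and> set xs \<subseteq> S \<and> z \<in> S \<and> fprod xs = z)"
    using product_free k_ge_2 unfolding strongly_product_free_def by blast
  moreover have "length [[], []] = (2::nat)" "set [[], []] \<subseteq> S" using \<open>[] \<in> S\<close> by auto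
  ultimately show False by blast
qed

lemma append_w_in_Cw: "s \<in> S \<Longrightarrow> s @ w \<in> Cw"
  using cone_append_closed[OF xy w_in_semiG] S_subset_cone mem_cone_self by blast

lemma append_w_in_semiG: "s \<in> S \<Longrightarrow> s @ w \<in> G"
  using append_w_in_Cw Cw_subset_semiG by blast

lemma Cs_eq: "Cs s = (\<lambda>a. s @ a) ` Cw"
  using cone_append[OF xy w_in_semiG] by simp

lemma Cs_subset_Cw: "s \<in> S \<Longrightarrow> Cs s \<subseteq> Cw"
  using cone_subset_cone[OF xy append_w_in_Cw] by blast

lemma mu_trunc_Cs_le: "mu (trunc (Cs s) n) \<le> (Mw n + 1) / base TYPE('a) ^ length s"
  unfolding Cs_eq by (rule mu_trunc_prefix_le)

lemma Mw_at_top: "filterlim (\<lambda>n. Mw n) at_top sequentially"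
  by (rule mu_trunc_cone_at_top[OF xy card_ge_2 w_in_semiG])

lemma Mw_mono: "m \<le> n \<Longrightarrow> Mw m \<le> Mw n"
  by (rule mu_trunc_mono_length)

lemma Mw_le_diff: "Mw n \<le> Mw (n - L) + real L"
  by (rule mu_trunc_le_diff[OF cone_reduced[OF xy w_in_semiG]])

lemma minimal_subset_S: "minimal \<subseteq> S"
  by (auto simp: minimal_def)

lemma cone_subset_minimal_cone:
  assumes s: "s \<in> S"
  obtains t where "t \<in> minimal" "Cs s \<subseteq> Cs t"
proof -
  let ?P = "\<lambda>t. t \<in> S \<and> s @ w \<in> Cs t"
  have "?P s" using s mem_cone_self by blast
  then obtain t where t: "?P t" and least: "\<And>u. ?P u \<Longrightarrow> length t \<le> length u"
    using ex_has_least_nat[of ?P s length] by blast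
  have "t \<in> minimal"
    unfolding minimal_def
  proof (intro CollectI conjI ballI impI)
    show "t \<in> S" using t by simp
    fix u assume u: "u \<in> S" "t @ w \<in> Cs u"
    then have "Cs t \<subseteq> Cs u" by (intro cone_subset_cone[OF xy])
    then have "?P u" using t u(1) by blast
    then have "length t \<le> length u" by (rule least)
    moreover have "length (u @ w) \<le> length (t @ w)" using u(2) by (rule length_le_of_mem_cone)
    ultimately have "length (t @ w) \<le> length (u @ w)" by simp
    then have "take (length (u @ w)) (t @ w) = t @ w" by (rule take_all)
    moreover have "take (length (u @ w)) (t @ w) = u @ w" using u(2) by (rule take_length_of_mem_cone)
    ultimately show "u = t" by simp
  qed
  moreover have "Cs s \<subseteq> Cs t" using t by (intro cone_subset_cone[OF xy]) simp
  ultimately show ?thesis by (rule that)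
qed

lemma minimal_cones_disjoint:
  assumes s: "s \<in> minimal" and t: "t \<in> minimal" and "s \<noteq> t"
  shows "Cs s \<inter> Cs t = {}"
proof (rule ccontr)
  assume "Cs s \<inter> Cs t \<noteq> {}"
  then obtain z where z: "z \<in> Cs s" "z \<in> Cs t" by blast
  have st: "s \<in> S" "t \<in> S" using s t minimal_subset_S by blast+
  have "s @ w \<in> Cs t \<or> t @ w \<in> Cs s"
  proof (cases "length (s @ w) \<le> length (t @ w)")
    case True
    then show ?thesis
      using cone_nested[OF xy append_w_in_semiG[OF st(1)] append_w_in_semiG[OF st(2)] _ z]
        Nil_notin_S st(2) by auto
  next
    case False
    then show ?thesis
      using cone_nested[OF xy append_w_in_semiG[OF st(2)] append_w_in_semiG[OF st(1)] _ z(2) z(1)]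
        Nil_notin_S st(1) by auto
  qed
  then show False using s t st \<open>s \<noteq> t\<close> unfolding minimal_def by blast
qed

lemma uncovered_subset_S: "uncovered \<subseteq> S"
  by (auto simp: uncovered_def)

lemma uncovered_window:
  assumes q: "q1 \<in> uncovered" "q2 \<in> uncovered" and z: "z \<in> Cs q1" "z \<in> Cs q2"
    and le: "length q1 \<le> length q2"
  shows "length q2 < length q1 + length w"
proof (rule ccontr)
  assume far: "\<not> ?thesis"
  have S: "q1 \<in> S" "q2 \<in> S" using q uncovered_subset_S by blast+
  have "q2 @ w \<in> Cs q1"
    using cone_nested[OF xy append_w_in_semiG[OF S(1)] append_w_in_semiG[OF S(2)] _ z]
      Nil_notin_S S(2) le by auto
  moreover have "q2 @ w \<in> cone x y q2"
    unfolding cone_def using w_in_semiG by blast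
  ultimately have "q2 \<in> Cs q1"
    using cone_nested[OF xy append_w_in_semiG[OF S(1)], of q2 "q2 @ w"]
      S_subset_semiG S(2) Nil_notin_S far by auto
  then show False using q(2) S(1) by (auto simp: uncovered_def)
qed

lemma card_uncovered_cones_le:
  "finite {q \<in> uncovered. z \<in> Cs q} \<and> card {q \<in> uncovered. z \<in> Cs q} \<le> length w"
proof (cases "{q \<in> uncovered. z \<in> Cs q} = {}")
  case True
  show ?thesis unfolding True by simp
next
  case False
  let ?K = "{q \<in> uncovered. z \<in> Cs q}"
  obtain q1 where q1: "q1 \<in> ?K" and least: "\<And>q. q \<in> ?K \<Longrightarrow> length q1 \<le> length q"
    using ex_has_least_nat[of "\<lambda>q. q \<in> ?K"] False by blast
  let ?I = "{length q1..<length q1 + length w}"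
  have "?K \<subseteq> (\<lambda>i. take i z) ` ?I"
  proof
    fix q assume q: "q \<in> ?K"
    have "take (length q) z = q" using q by (auto intro: take_length_of_mem_cone_append)
    moreover have "length q < length q1 + length w"
      using uncovered_window[of q1 q z] q1 q least[OF q] by blast
    ultimately show "q \<in> (\<lambda>i. take i z) ` ?I" using least[OF q] by force
  qed
  moreover have "card ((\<lambda>i. take i z) ` ?I) \<le> length w"
    using card_image_le[of ?I "\<lambda>i. take i z"] by simp
  ultimately show ?thesis by (meson card_mono finite_atLeastLessThan finite_imageI finite_subset order_trans)
qed

lemma trunc_Cs_eq: "q \<in> S \<Longrightarrow> trunc (Cs q) n = {z \<in> trunc Cw n. z \<in> Cs q}"
  using Cs_subset_Cw[of q] unfolding trunc_def by blast

lemma sum_mu_trunc_uncovered_cones_le: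
  assumes fin: "finite P" and P: "P \<subseteq> uncovered"
  shows "(\<Sum>q\<in>P. mu (trunc (Cs q) n)) \<le> length w * Mw n"
proof -
  have PS: "P \<subseteq> S" using P uncovered_subset_S by blast
  have "(\<Sum>q\<in>P. mu (trunc (Cs q) n)) = (\<Sum>q\<in>P. \<Sum>z\<in>trunc Cw n. if z \<in> Cs q then weight z else 0)"
  proof (rule sum.cong[OF refl])
    fix q assume "q \<in> P"
    then have "q \<in> S" using PS by blast
    show "mu (trunc (Cs q) n) = (\<Sum>z\<in>trunc Cw n. if z \<in> Cs q then weight z else 0)"
      unfolding mu_def trunc_Cs_eq[OF \<open>q \<in> S\<close>] by (rule sum.inter_filter[OF finite_trunc])
  qed
  also have "\<dots> = (\<Sum>z\<in>trunc Cw n. \<Sum>q\<in>P. if z \<in> Cs q then weight z else 0)"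
    by (rule sum.swap)
  also have "\<dots> \<le> (\<Sum>z\<in>trunc Cw n. length w * weight z)"
  proof (rule sum_mono)
    fix z
    have "card {q\<in>P. z \<in> Cs q} \<le> card {q \<in> uncovered. z \<in> Cs q}"
      using card_uncovered_cones_le[of z] P by (intro card_mono) auto
    then have "card {q\<in>P. z \<in> Cs q} \<le> length w" using card_uncovered_cones_le[of z] by simp
    then have "card {q\<in>P. z \<in> Cs q} * weight z \<le> length w * weight z"
      using weight_nonneg[of z] by (intro mult_right_mono) auto
    then show "(\<Sum>q\<in>P. if z \<in> Cs q then weight z else 0) \<le> length w * weight z"
      by (simp add: sum.inter_filter[OF fin, symmetric])
  qed
  also have "\<dots> = length w * Mw n"
    unfolding mu_def by (simp add: sum_distrib_left)
  finally show ?thesis .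
qed

text \<open>An uncovered \<open>q\<close> of length at most \<open>p\<close> has a cone of measure at least \<open>Mw m \<cdot> weight q\<close>
  among the words of length at most \<open>p + m\<close>.\<close>
lemma Mw_mult_mu_trunc_uncovered_le: "Mw m * mu (trunc uncovered p) \<le> length w * Mw (p + m)"
proof -
  let ?P = "trunc uncovered p"
  have "Mw m * mu ?P = (\<Sum>q\<in>?P. Mw m * weight q)"
    unfolding mu_def by (simp add: sum_distrib_left)
  also have "\<dots> \<le> (\<Sum>q\<in>?P. mu (trunc (Cs q) (p + m)))"
  proof (rule sum_mono)
    fix q assume "q \<in> ?P"
    then have "length q \<le> p" by (simp add: trunc_def)
    have b: "base TYPE('a) ^ length q > 0" using base_pos[where 'a='a] by simp
    have "Mw m * weight q \<le> Mw m / base TYPE('a) ^ length q"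
      using mult_left_mono[OF weight_le mu_nonneg] by simp
    also have "\<dots> \<le> Mw (p + m - length q) / base TYPE('a) ^ length q"
      using \<open>length q \<le> p\<close> b by (intro divide_right_mono Mw_mono) auto
    also have "\<dots> \<le> mu (trunc (Cs q) (p + m))"
      unfolding Cs_eq by (rule mu_trunc_prefix_ge)
    finally show "Mw m * weight q \<le> mu (trunc (Cs q) (p + m))" .
  qed
  also have "\<dots> \<le> length w * Mw (p + m)"
    by (rule sum_mu_trunc_uncovered_cones_le[OF finite_trunc]) (auto simp: trunc_def)
  finally show ?thesis .
qed

lemma eventually_mu_trunc_uncovered_le:
  assumes \<delta>: "\<delta> > 0"
  shows "eventually (\<lambda>n. mu (trunc uncovered n) \<le> \<delta> * Mw n) sequentially"
proof -
  obtain m where m: "2 * length w / \<delta> + 1 \<le> Mw m"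
    using Mw_at_top unfolding filterlim_at_top eventually_sequentially by blast
  have "0 \<le> 2 * length w / \<delta>" using \<delta> by simp
  with m have M_pos: "Mw m > 0" by linarith
  have "2 * length w / \<delta> \<le> Mw m" using m by simp
  then have w_le: "length w / Mw m \<le> \<delta> / 2"
    using \<delta> M_pos by (simp add: field_simps)
  have "eventually (\<lambda>n. 2 * m / \<delta> \<le> Mw n) sequentially"
    using Mw_at_top unfolding filterlim_at_top by blast
  moreover have "eventually (\<lambda>n. m \<le> n) sequentially" by (rule eventually_ge_at_top)
  ultimately show ?thesis
  proof eventually_elim
    case (elim n)
    have "Mw m * mu (trunc uncovered (n - m)) \<le> length w * Mw n"
      using Mw_mult_mu_trunc_uncovered_le[of m "n - m"] elim by simp
    then have "mu (trunc uncovered (n - m)) \<le> (length w / Mw m) * Mw n"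
      using M_pos by (simp add: field_simps)
    also have "\<dots> \<le> \<delta> / 2 * Mw n" using w_le mu_nonneg by (rule mult_right_mono)
    finally have "mu (trunc uncovered (n - m)) \<le> \<delta> / 2 * Mw n" .
    moreover have "mu (trunc uncovered n) \<le> mu (trunc uncovered (n - m)) + m"
      using uncovered_subset_S S_reduced by (intro mu_trunc_le_diff) blast
    moreover have "real m \<le> \<delta> / 2 * Mw n" using elim \<delta> by (simp add: field_simps)
    ultimately show ?case by simp
  qed
qed

lemma trunc_S_subset_cover:
  "trunc S n \<subseteq> (\<Union>s\<in>{s \<in> minimal. length s \<le> n}. trunc (S \<inter> Cs s) n) \<union> trunc uncovered n"
proof
  fix z assume z: "z \<in> trunc S n"
  show "z \<in> (\<Union>s\<in>{s \<in> minimal. length s \<le> n}. trunc (S \<inter> Cs s) n) \<union> trunc uncovered n"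
  proof (cases "\<exists>s\<in>S. z \<in> Cs s")
    case True
    then obtain s0 where s0: "s0 \<in> S" "z \<in> Cs s0" by blast
    obtain s where s: "s \<in> minimal" "Cs s0 \<subseteq> Cs s" using cone_subset_minimal_cone[OF s0(1)] .
    have zs: "z \<in> Cs s" using s0(2) s(2) by blast
    then have "length (s @ w) \<le> length z" by (rule length_le_of_mem_cone)
    then have "length s \<le> n" using z by (simp add: trunc_def)
    then show ?thesis using s(1) z zs by (auto simp: trunc_def)
  qed (use z in \<open>auto simp: trunc_def uncovered_def\<close>)
qed

lemma mu_trunc_S_le_cover:
  assumes F0: "finite F0" "F0 \<subseteq> minimal" and c: "0 \<le> c"
    and tail: "\<And>F. finite F \<Longrightarrow> F \<subseteq> minimal \<Longrightarrow> F \<inter> F0 = {} \<Longrightarrow> prefix_mass F \<le> \<delta>"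
    and dense: "\<forall>s\<in>F0. mu (trunc (S \<inter> Cs s) n) \<le> c * mu (trunc (Cs s) n)"
  shows "mu (trunc S n) \<le> (c * prefix_mass F0 + \<delta>) * (Mw n + 1) + mu (trunc uncovered n)"
proof -
  define Fn where "Fn = {s \<in> minimal. length s \<le> n}"
  define g where "g s = mu (trunc (S \<inter> Cs s) n)" for s
  have "Fn \<subseteq> trunc S n" using minimal_subset_S by (auto simp: Fn_def trunc_def)
  then have Fn: "finite Fn" "Fn \<subseteq> minimal"
    using finite_subset[OF _ finite_trunc] by (auto simp: Fn_def)
  have g_le: "g s \<le> (Mw n + 1) / base TYPE('a) ^ length s" for s
    unfolding g_def by (rule order_trans[OF mu_trunc_mono mu_trunc_Cs_le]) blast
  have "mu (trunc S n) \<le> mu ((\<Union>s\<in>Fn. trunc (S \<inter> Cs s) n) \<union> trunc uncovered n)"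
    unfolding mu_def Fn_def
    by (rule sum_mono2[OF _ trunc_S_subset_cover])
      (use Fn(1) finite_trunc weight_nonneg in \<open>auto simp: Fn_def\<close>)
  also have "\<dots> \<le> mu (\<Union>s\<in>Fn. trunc (S \<inter> Cs s) n) + mu (trunc uncovered n)"
    by (rule mu_Un_le) (use Fn(1) finite_trunc in auto)
  also have "mu (\<Union>s\<in>Fn. trunc (S \<inter> Cs s) n) \<le> (\<Sum>s\<in>Fn. g s)"
    unfolding g_def by (rule mu_UN_le[OF Fn(1) finite_trunc])
  also have "(\<Sum>s\<in>Fn. g s) = (\<Sum>s\<in>Fn \<inter> F0. g s) + (\<Sum>s\<in>Fn - F0. g s)"
    by (rule sum.Int_Diff[OF Fn(1)])
  also have "(\<Sum>s\<in>Fn \<inter> F0. g s) \<le> (\<Sum>s\<in>F0. c * ((Mw n + 1) / base TYPE('a) ^ length s))"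
  proof -
    have "(\<Sum>s\<in>Fn \<inter> F0. g s) \<le> (\<Sum>s\<in>F0. g s)"
      by (rule sum_mono2[OF F0(1)]) (auto simp: g_def mu_nonneg)
    also have "\<dots> \<le> (\<Sum>s\<in>F0. c * ((Mw n + 1) / base TYPE('a) ^ length s))"
      using dense c by (intro sum_mono order_trans[OF _ mult_left_mono[OF mu_trunc_Cs_le]])
        (auto simp: g_def)
    finally show ?thesis .
  qed
  also have "\<dots> = c * prefix_mass F0 * (Mw n + 1)"
    unfolding prefix_mass_def sum_distrib_left sum_distrib_right by (intro sum.cong) auto
  also have "(\<Sum>s\<in>Fn - F0. g s) \<le> prefix_mass (Fn - F0) * (Mw n + 1)"
    using g_le by (simp add: prefix_mass_def sum_distrib_right sum_mono)
  also have "\<dots> \<le> \<delta> * (Mw n + 1)"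
    using tail[of "Fn - F0"] Fn mu_nonneg[of "trunc Cw n"] by (intro mult_right_mono) auto
  finally show ?thesis by (simp add: algebra_simps)
qed

lemma dens_le_of_cover:
  assumes F0: "finite F0" "F0 \<subseteq> minimal" and \<delta>: "0 < \<delta>"
    and tail: "\<And>F. finite F \<Longrightarrow> F \<subseteq> minimal \<Longrightarrow> F \<inter> F0 = {} \<Longrightarrow> prefix_mass F \<le> \<delta>"
  shows "dens \<le> ((dens + \<epsilon> + \<delta>) * prefix_mass F0 + \<delta>) * (1 + \<delta>) + \<delta>"
proof -
  let ?c = "dens + \<epsilon> + \<delta>"
  let ?B = "(?c * prefix_mass F0 + \<delta>) * (1 + \<delta>) + \<delta>"
  have c: "0 \<le> ?c" using dens_nonneg eps_pos \<delta> by simp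
  have "eventually (\<lambda>n. \<forall>s\<in>F0. mu (trunc (S \<inter> Cs s) n) \<le> ?c * mu (trunc (Cs s) n)) sequentially"
    using F0(1)
  proof (rule eventually_ball_finite, intro ballI eventually_mu_trunc_le_of_upper_density_less)
    fix s assume "s \<in> F0"
    then have "s \<in> S" using F0(2) minimal_subset_S by blast
    then show "upper_density (Cs s) (S \<inter> Cs s) < ?c" using regular[of s] \<delta> by simp
  qed blast
  moreover have "eventually (\<lambda>n. mu (trunc uncovered n) \<le> \<delta> * Mw n) sequentially"
    by (rule eventually_mu_trunc_uncovered_le[OF \<delta>])
  moreover have "eventually (\<lambda>n. 1 / \<delta> \<le> Mw n) sequentially"
    using Mw_at_top unfolding filterlim_at_top by blast
  ultimately have "eventually (\<lambda>n. mu (trunc S n) / Mw n \<le> ?B) sequentially"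
  proof eventually_elim
    case (elim n)
    have "0 < 1 / \<delta>" using \<delta> by simp
    then have M_pos: "0 < Mw n" using elim by linarith
    have one_le: "1 \<le> \<delta> * Mw n" using elim \<delta> by (simp add: field_simps)
    have "mu (trunc S n) \<le> (?c * prefix_mass F0 + \<delta>) * (Mw n + 1) + \<delta> * Mw n"
      using mu_trunc_S_le_cover[OF F0 c tail] elim by fastforce
    also have "\<dots> \<le> (?c * prefix_mass F0 + \<delta>) * ((1 + \<delta>) * Mw n) + \<delta> * Mw n"
    proof -
      have "Mw n + 1 \<le> (1 + \<delta>) * Mw n" using one_le by (simp add: algebra_simps)
      moreover have "0 \<le> ?c * prefix_mass F0 + \<delta>"
        using mult_nonneg_nonneg[OF c prefix_mass_nonneg[of F0]] \<delta> by simp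
      ultimately show ?thesis by (simp add: mult_left_mono)
    qed
    also have "\<dots> = ?B * Mw n" by (simp add: algebra_simps)
    finally show ?case using M_pos by (simp add: divide_le_eq)
  qed
  then show ?thesis by (rule upper_density_le_of_eventually[OF S_subset_cone])
qed

lemma dens_le_Sup_prefix_mass:
  assumes bdd: "bdd_above (prefix_mass ` {F. finite F \<and> F \<subseteq> minimal})"
  shows "dens \<le> (dens + \<epsilon>) * (SUP F\<in>{F. finite F \<and> F \<subseteq> minimal}. prefix_mass F)"
proof -
  define \<sigma> where "\<sigma> = (SUP F\<in>{F. finite F \<and> F \<subseteq> minimal}. prefix_mass F)"
  have le_\<sigma>: "prefix_mass F \<le> \<sigma>" if "finite F" "F \<subseteq> minimal" for F
    unfolding \<sigma>_def using that by (intro cSUP_upper[OF _ bdd]) auto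
  let ?B = "\<lambda>\<delta>. ((dens + \<epsilon> + \<delta>) * \<sigma> + \<delta>) * (1 + \<delta>) + \<delta>"
  have "dens \<le> ?B \<delta>" if \<delta>: "0 < \<delta>" for \<delta>
  proof -
    have "\<sigma> - \<delta> < \<sigma>" using \<delta> by simp
    then obtain F0 where F0: "finite F0" "F0 \<subseteq> minimal" "\<sigma> - \<delta> < prefix_mass F0"
      unfolding \<sigma>_def by (subst (asm) less_cSUP_iff[OF _ bdd]) auto
    have tail: "prefix_mass F \<le> \<delta>" if "finite F" "F \<subseteq> minimal" "F \<inter> F0 = {}" for F
    proof -
      have "prefix_mass F + prefix_mass F0 = prefix_mass (F \<union> F0)"
        unfolding prefix_mass_def using that F0(1) by (simp add: sum.union_disjoint)
      also have "\<dots> \<le> \<sigma>" using that F0 by (intro le_\<sigma>) auto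
      finally show ?thesis using F0(3) by simp
    qed
    have "dens \<le> ((dens + \<epsilon> + \<delta>) * prefix_mass F0 + \<delta>) * (1 + \<delta>) + \<delta>"
      by (rule dens_le_of_cover[OF F0(1,2) \<delta> tail])
    also have "\<dots> \<le> ?B \<delta>"
      using le_\<sigma>[OF F0(1,2)] dens_nonneg eps_pos \<delta>
      by (intro add_right_mono mult_right_mono mult_left_mono) auto
    finally show ?thesis .
  qed
  then have "eventually (\<lambda>\<delta>. dens \<le> ?B \<delta>) (at_right 0)"
    using eventually_at_right_less[of "0::real"] by (auto elim: eventually_mono)
  moreover have "(?B \<longlongrightarrow> ?B 0) (at_right 0)"
    by (intro tendsto_intros)
  ultimately have "dens \<le> ?B 0"
    by (intro tendsto_lowerbound[of ?B]) auto
  then show ?thesis by (simp add: \<sigma>_def)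
qed

lemma exists_minimal_prefix_mass_ge:
  assumes "dens > 0"
  obtains F where "finite F" "F \<subseteq> minimal" "dens / (dens + 2 * \<epsilon>) \<le> prefix_mass F"
proof -
  let ?r = "dens / (dens + 2 * \<epsilon>)"
  let ?\<sigma> = "SUP F\<in>{F. finite F \<and> F \<subseteq> minimal}. prefix_mass F"
  have "\<exists>F. finite F \<and> F \<subseteq> minimal \<and> ?r \<le> prefix_mass F"
  proof (rule ccontr)
    assume "\<nexists>F. finite F \<and> F \<subseteq> minimal \<and> ?r \<le> prefix_mass F"
    then have less: "prefix_mass F < ?r" if "finite F" "F \<subseteq> minimal" for F
      using that by auto
    have bdd: "bdd_above (prefix_mass ` {F. finite F \<and> F \<subseteq> minimal})"
      using less by (auto intro!: bdd_aboveI[of _ ?r] less_imp_le)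
    have "?\<sigma> \<le> ?r"
      using less by (intro cSUP_least) (auto intro: less_imp_le)
    have "dens \<le> (dens + \<epsilon>) * ?\<sigma>" by (rule dens_le_Sup_prefix_mass[OF bdd])
    also have "\<dots> \<le> (dens + \<epsilon>) * ?r"
      using \<open>?\<sigma> \<le> ?r\<close> assms eps_pos by (intro mult_left_mono) auto
    also have "\<dots> < dens"
      using assms eps_pos by (simp add: field_simps)
    finally show False by simp
  qed
  then show ?thesis using that by blast
qed

section \<open>Products of elements of a product-free set\<close>

definition products :: "nat \<Rightarrow> 'a letter list set" where
  "products j = {fprod xs | xs. xs \<noteq> [] \<and> length xs \<le> Suc j \<and> set xs \<subseteq> S}"

lemma fprod_singleton: "a \<in> G \<Longrightarrow> fprod [a] = a"
  by (simp add: fprod_def fmult_def reduce_reduced semiG_def)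

lemma fprod_Cons_append: "xs \<noteq> [] \<Longrightarrow> set (a # xs) \<subseteq> Cw \<Longrightarrow> fprod (a # xs) = a @ fprod xs"
  and fprod_in_Cw: "xs \<noteq> [] \<Longrightarrow> set xs \<subseteq> Cw \<Longrightarrow> fprod xs \<in> Cw"
proof -
  have *: "fprod xs \<in> Cw \<and> (\<forall>a. a \<in> Cw \<longrightarrow> fprod (a # xs) = a @ fprod xs)"
    if "xs \<noteq> []" "set xs \<subseteq> Cw" for xs
    using that
  proof (induction xs)
    case (Cons b xs)
    have b: "b \<in> Cw" using Cons.prems by simp
    have "fprod (b # xs) \<in> Cw"
    proof (cases "xs = []")
      case True
      then show ?thesis using b Cw_subset_semiG fprod_singleton by auto
    next
      case False
      with Cons have "fprod (b # xs) = b @ fprod xs" "fprod xs \<in> Cw" by auto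
      then show ?thesis using cone_append_closed[OF xy w_in_semiG b] by simp
    qed
    moreover have "fprod (a # b # xs) = a @ fprod (b # xs)" if "a \<in> Cw" for a
      using fmult_semiG[OF xy] that \<open>fprod (b # xs) \<in> Cw\<close> Cw_subset_semiG
      by (auto simp: fprod_def)
    ultimately show ?case by blast
  qed simp
  show "xs \<noteq> [] \<Longrightarrow> set (a # xs) \<subseteq> Cw \<Longrightarrow> fprod (a # xs) = a @ fprod xs"
    using * by simp
  show "xs \<noteq> [] \<Longrightarrow> set xs \<subseteq> Cw \<Longrightarrow> fprod xs \<in> Cw"
    using * by simp
qed

lemma products_subset_Cw: "products j \<subseteq> Cw"
  unfolding products_def using fprod_in_Cw S_subset_cone by blast

lemma S_subset_products: "S \<subseteq> products j"
proof
  fix s assume "s \<in> S"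
  then have "fprod [s] = s" using S_subset_semiG fprod_singleton by blast
  with \<open>s \<in> S\<close> show "s \<in> products j"
    unfolding products_def by (intro CollectI exI[of _ "[s]"]) auto
qed

lemma append_products:
  assumes s: "s \<in> S" and t: "t \<in> products j"
  shows "s @ t \<in> products (Suc j)" and "Suc (Suc j) \<le> k \<Longrightarrow> s @ t \<notin> S"
proof -
  obtain xs where xs: "t = fprod xs" "xs \<noteq> []" "length xs \<le> Suc j" "set xs \<subseteq> S"
    using t unfolding products_def by blast
  have prod: "fprod (s # xs) = s @ t"
    using fprod_Cons_append[OF xs(2)] xs(1,4) s S_subset_cone by auto
  show "s @ t \<in> products (Suc j)"
    unfolding products_def by (intro CollectI exI[of _ "s # xs"]) (use prod xs s in auto)
  show "s @ t \<notin> S" if "Suc (Suc j) \<le> k"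
  proof
    assume "s @ t \<in> S"
    moreover have "2 \<le> length (s # xs)" "length (s # xs) \<le> k" "set (s # xs) \<subseteq> S"
      using xs(2,3,4) s that by (cases xs; auto)+
    ultimately show False
      using product_free prod unfolding strongly_product_free_def by blast
  qed
qed

lemma mu_trunc_products_Suc_ge:
  assumes F: "finite F" "F \<subseteq> minimal" and k: "Suc (Suc j) \<le> k"
  shows "mu (trunc S n) + (\<Sum>s\<in>F. mu (trunc ((\<lambda>a. s @ a) ` products j) n))
    \<le> mu (trunc (products (Suc j)) n)"
proof -
  define A where "A s = trunc ((\<lambda>a. s @ a) ` products j) n" for s
  have FS: "F \<subseteq> S" using F(2) minimal_subset_S by blast
  have A_Cs: "A s \<subseteq> Cs s" for s
    unfolding A_def Cs_eq trunc_def using products_subset_Cw by blast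
  have disj: "A s \<inter> A t = {}" if "s \<in> F" "t \<in> F" "s \<noteq> t" for s t
    using minimal_cones_disjoint[of s t] that F(2) A_Cs[of s] A_Cs[of t] by blast
  have disj_S: "trunc S n \<inter> (\<Union>s\<in>F. A s) = {}"
    unfolding A_def trunc_def using append_products(2)[OF _ _ k] FS by blast
  have sub: "trunc S n \<union> (\<Union>s\<in>F. A s) \<subseteq> trunc (products (Suc j)) n"
    unfolding A_def trunc_def using S_subset_products append_products(1) FS by blast
  have "mu (trunc S n) + (\<Sum>s\<in>F. mu (A s)) = mu (trunc S n) + mu (\<Union>s\<in>F. A s)"
    unfolding mu_def by (subst sum.UNION_disjoint) (use F(1) disj in \<open>auto simp: A_def finite_trunc\<close>)
  also have "\<dots> = mu (trunc S n \<union> (\<Union>s\<in>F. A s))"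
    unfolding mu_def
    by (rule sum.union_disjoint[symmetric]) (use F(1) disj_S in \<open>auto simp: A_def finite_trunc\<close>)
  also have "\<dots> \<le> mu (trunc (products (Suc j)) n)"
    unfolding mu_def by (rule sum_mono2[OF finite_trunc sub]) (simp add: weight_nonneg)
  finally show ?thesis by (simp add: A_def)
qed

abbreviation "ratio_S n \<equiv> mu (trunc S n) / Mw n"

lemma product_lower_bound_le_products:
  assumes F: "finite F" "F \<subseteq> minimal"
  shows "Suc j \<le> k \<Longrightarrow>
    product_lower_bound (\<lambda>n. ratio_S n) (\<lambda>n. Mw n) F length (base TYPE('a)) j n
      \<le> mu (trunc (products j) n) / Mw n"
proof (induction j arbitrary: n)
  case 0
  show ?case
    using mu_trunc_mono[OF S_subset_products[of 0], of n] mu_nonneg[of "trunc Cw n"]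
    by (simp add: divide_right_mono)
next
  case (Suc j)
  let ?b = "base TYPE('a)"
  let ?B = "product_lower_bound (\<lambda>n. ratio_S n) (\<lambda>n. Mw n) F length ?b j"
  let ?P = "\<lambda>n. mu (trunc (products j) n)"
  have "product_lower_bound (\<lambda>n. ratio_S n) (\<lambda>n. Mw n) F length ?b (Suc j) n
      = ratio_S n + (\<Sum>s\<in>F. (1 / ?b ^ length s) * (Mw (n - length s) / Mw n) * ?B (n - length s))"
    by simp
  also have "\<dots> \<le> ratio_S n +
      (\<Sum>s\<in>F. (1 / ?b ^ length s) * (Mw (n - length s) / Mw n) * (?P (n - length s) / Mw (n - length s)))"
    using Suc base_pos[where 'a='a]
    by (intro add_left_mono sum_mono mult_left_mono) (simp_all add: mu_nonneg)
  also have "\<dots> = ratio_S n + (\<Sum>s\<in>F. (1 / ?b ^ length s) * ?P (n - length s) / Mw n)"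
    by (intro arg_cong2[where f="(+)"] refl sum.cong mult_ratio_cancel mu_nonneg
        mu_trunc_mono products_subset_Cw)
  also have "\<dots> \<le> ratio_S n + (\<Sum>s\<in>F. mu (trunc ((\<lambda>a. s @ a) ` products j) n) / Mw n)"
    using mu_trunc_prefix_ge[of "products j"]
    by (intro add_left_mono sum_mono divide_right_mono mu_nonneg) simp
  also have "\<dots> = (mu (trunc S n) + (\<Sum>s\<in>F. mu (trunc ((\<lambda>a. s @ a) ` products j) n))) / Mw n"
    by (simp add: add_divide_distrib sum_divide_distrib)
  also have "\<dots> \<le> mu (trunc (products (Suc j)) n) / Mw n"
    by (intro divide_right_mono mu_trunc_products_Suc_ge[OF F Suc.prems] mu_nonneg)
  finally show ?case .
qed

lemma ratio_S_shift_tendsto: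
  assumes \<rho>: "strict_mono \<rho>" and lim: "(\<lambda>i. ratio_S (\<rho> i)) \<longlonglongrightarrow> dens"
  shows "(\<lambda>i. ratio_S (\<rho> i - L)) \<longlonglongrightarrow> dens"
proof -
  have "(\<lambda>n. ratio_S n - ratio_S (n - L)) \<longlonglongrightarrow> 0"
  proof (rule tendsto_ratio_diff_shift_0[OF Mw_at_top])
    show "\<And>n. Mw (n - L) \<le> Mw n" "\<And>n. mu (trunc S (n - L)) \<le> mu (trunc S n)"
      by (simp_all add: Mw_mono mu_trunc_mono_length)
    show "\<And>n. Mw n \<le> Mw (n - L) + real L" by (rule Mw_le_diff)
    show "\<And>n. 0 \<le> mu (trunc S n)" by (rule mu_nonneg)
    show "\<And>n. mu (trunc S n) \<le> Mw n" by (rule mu_trunc_mono[OF S_subset_cone])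
    show "\<And>n. mu (trunc S n) \<le> mu (trunc S (n - L)) + real L"
      by (rule mu_trunc_le_diff[OF S_reduced])
  qed
  then have "(\<lambda>i. ratio_S (\<rho> i) - ratio_S (\<rho> i - L)) \<longlonglongrightarrow> 0"
    using LIMSEQ_subseq_LIMSEQ[OF _ \<rho>] by (simp add: o_def)
  from tendsto_diff[OF lim this] show ?thesis by simp
qed

lemma Mw_shift_ratio_tendsto:
  assumes \<rho>: "strict_mono \<rho>"
  shows "(\<lambda>i. Mw (\<rho> i - L - a) / Mw (\<rho> i - L)) \<longlonglongrightarrow> 1"
proof -
  have "(\<lambda>n. Mw (n - a) / Mw n) \<longlonglongrightarrow> 1"
    by (rule tendsto_ratio_shift_1[OF Mw_at_top]) (simp_all add: Mw_mono Mw_le_diff)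
  moreover have "filterlim (\<lambda>i. \<rho> i - L) sequentially sequentially"
    by (rule filterlim_compose[OF filterlim_minus_const_nat_at_top filterlim_subseq[OF \<rho>]])
  ultimately show ?thesis by (rule filterlim_compose)
qed

lemma dens_geometric_sum_le_1:
  assumes F: "finite F" "F \<subseteq> minimal"
  shows "dens * (\<Sum>i<k. prefix_mass F ^ i) \<le> 1"
proof -
  obtain \<rho> where \<rho>: "strict_mono \<rho>" "(\<lambda>i. ratio_S (\<rho> i)) \<longlonglongrightarrow> dens"
    using upper_density_subseq[OF S_subset_cone] by blast
  have k: "Suc (k - 1) = k" using k_ge_2 by simp
  let ?B = "\<lambda>i. product_lower_bound (\<lambda>n. ratio_S n) (\<lambda>n. Mw n) F length (base TYPE('a)) (k - 1) (\<rho> i - 0)"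
  have "?B \<longlonglongrightarrow> dens * (\<Sum>i<Suc (k - 1). prefix_mass F ^ i)"
    unfolding prefix_mass_def
    by (rule product_lower_bound_tendsto[OF ratio_S_shift_tendsto[OF \<rho>] Mw_shift_ratio_tendsto[OF \<rho>(1)]])
  moreover have "?B i \<le> 1" for i
    using product_lower_bound_le_products[OF F, of "k - 1" "\<rho> i"] k
      ratio_trunc_le_1[OF products_subset_Cw, of "k - 1" "\<rho> i"] by simp
  ultimately show ?thesis using k LIMSEQ_le_const2[of ?B] by auto
qed

end

text \<open>For \<open>s = w \<alpha>\<close> the cone \<open>s w G\<close> is the coset of \<open>w (\<alpha> w)\<close>, so regularity is only needed at
  \<open>w' = \<alpha> w\<close>.\<close>
lemma eps_regular_cone_append:
  assumes xy: "x \<noteq> inv_letter y" and w: "w \<in> semiG x y" and reg: "eps_regular x y \<epsilon> w S"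
    and s: "s \<in> S"
  shows "upper_density (cone x y (s @ w)) (S \<inter> cone x y (s @ w)) \<le> upper_density (cone x y w) S + \<epsilon>"
proof -
  have S: "S \<subseteq> cone x y w" using reg coset_eq_cone[OF xy w] by (simp add: eps_regular_def)
  then obtain \<alpha> where \<alpha>: "\<alpha> \<in> semiG x y" "s = w @ \<alpha>" using s unfolding cone_def by auto
  have w': "\<alpha> @ w \<in> semiG x y" by (rule semiG_append[OF xy \<alpha>(1) w])
  have sw: "s @ w \<in> semiG x y" using \<alpha> semiG_append[OF xy w w'] by simp
  have prod: "fmult w (\<alpha> @ w) = s @ w" using fmult_semiG[OF xy w w'] \<alpha>(2) by simp
  have "upper_density (coset (fmult w (\<alpha> @ w)) (semiG x y)) (S \<inter> coset (fmult w (\<alpha> @ w)) (semiG x y))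
      \<le> upper_density (coset w (semiG x y)) S + \<epsilon>"
    using reg w' unfolding eps_regular_def by blast
  then show ?thesis unfolding prod coset_eq_cone[OF xy sw] coset_eq_cone[OF xy w] .
qed

theorem lemma3p3:
  fixes x y :: "'a::finite letter" and w :: "'a letter list" and S :: "'a letter list set"
    and \<epsilon> :: real and k :: nat
  assumes "CARD('a) \<ge> 2"
    and "x \<noteq> inv_letter y"
    and "w \<in> semiG x y"
    and "\<epsilon> > 0"
    and "k \<ge> 2"
    and "S \<subseteq> coset w (semiG x y)"
    and "strongly_product_free k S"
    and "eps_regular x y \<epsilon> w S"
  shows "let d = upper_density (coset w (semiG x y)) S
         in d * (\<Sum>i<k. (d / (d + 2 * \<epsilon>)) ^ i) \<le> 1"
proof -
  interpret regular_product_free x y w S \<epsilon> k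
    using assms eps_regular_cone_append[OF assms(2,3,8)]
    by unfold_locales (simp_all add: coset_eq_cone)
  have "d * (\<Sum>i<k. (d / (d + 2 * \<epsilon>)) ^ i) \<le> 1" if d: "d = dens" for d
  proof (cases "dens = 0")
    case False
    then have "dens > 0" using dens_nonneg by simp
    then obtain F where F: "finite F" "F \<subseteq> minimal" "dens / (dens + 2 * \<epsilon>) \<le> prefix_mass F"
      by (rule exists_minimal_prefix_mass_ge)
    have "dens * (\<Sum>i<k. (dens / (dens + 2 * \<epsilon>)) ^ i) \<le> dens * (\<Sum>i<k. prefix_mass F ^ i)"
      using F(3) dens_nonneg eps_pos by (intro mult_left_mono sum_mono power_mono) auto
    also have "\<dots> \<le> 1" by (rule dens_geometric_sum_le_1[OF F(1,2)])
    finally show ?thesis using d by simp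
  qed (use d in simp)
  then show ?thesis by (simp add: coset_eq_cone[OF assms(2,3)])
qed

end
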